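(* Let $e_1<e_2<e_3<e_4$ be distinct reals and $h>0$. Let $A(z)=\prod_{k=1}^4(z-e_k)$ and $R(z)=2hz^2-\eta_1z+\eta_2$, where $(\eta_1,\eta_2)$ is a value in the image of the reduced ellipsoidal momentum map $(\eta_1,\eta_2):M_h\to\mathbb R^2$, so that $R$ has real roots $r_1\le r_2$ with $e_1\le r_1\le r_2\le e_4$. Let $p(s)=\sqrt{-R(s)/(4A(s))}$ and define $$J_1=\frac2\pi\int_{e_1}^{\min(r_1,e_2)}p(s)\,ds,\quad J_2=\frac2\pi\int_{\max(r_1,e_2)}^{\min(r_2,e_3)}p(s)\,ds,\quad J_3=\frac2\pi\int_{\max(r_2,e_3)}^{e_4}p(s)\,ds.$$ Then $J_1+J_2+J_3=\sqrt{2h}$.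
   Context: $M_h=\{\mathbf L=(\ell_{ij})_{i<j}\in\mathbb R^6:\sum_{i<j}\ell_{ij}^2=2h,\ \ell_{12}\ell_{34}-\ell_{13}\ell_{24}+\ell_{14}\ell_{23}=0\}\cong S^2\times S^2$, and $\eta_1=\sum_{i<j}\ell_{ij}^2\sum_{k\ne i,j}e_k$, $\eta_2=\sum_{i<j}\ell_{ij}^2\prod_{k\ne i,j}e_k$. These $J_i$ are the (discrete-symmetry reduced, globally continuous) action variables of the geodesic flow on $S^3$ separated in ellipsoidal coordinates, where the separated momenta satisfy $p_i^2=-R(s_i)/(4A(s_i))$; on each integration interval the radicand is nonnegative. *)

theory Defs
  imports "HOL-Analysis.Analysis"
begin

text \<open>Index pairs (i,j) with 1 \<le> i < j \<le> 4; a point L of R^6 is represented by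
  its components L i j for (i,j) in this set (other values are irrelevant).\<close>
definition pairs4 :: "(nat \<times> nat) set" where
  "pairs4 = {(i, j). 1 \<le> i \<and> i < j \<and> j \<le> 4}"

definition M_h :: "real \<Rightarrow> (nat \<Rightarrow> nat \<Rightarrow> real) set" where
  "M_h h = {L. (\<Sum>(i, j)\<in>pairs4. (L i j)\<^sup>2) = 2 * h \<and>
              L 1 2 * L 3 4 - L 1 3 * L 2 4 + L 1 4 * L 2 3 = 0}"

definition eta1 :: "(nat \<Rightarrow> real) \<Rightarrow> (nat \<Rightarrow> nat \<Rightarrow> real) \<Rightarrow> real" where
  "eta1 e L = (\<Sum>(i, j)\<in>pairs4. (L i j)\<^sup>2 * (\<Sum>k\<in>{1..4} - {i, j}. e k))"

definition eta2 :: "(nat \<Rightarrow> real) \<Rightarrow> (nat \<Rightarrow> nat \<Rightarrow> real) \<Rightarrow> real" where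
  "eta2 e L = (\<Sum>(i, j)\<in>pairs4. (L i j)\<^sup>2 * (\<Prod>k\<in>{1..4} - {i, j}. e k))"

definition momentum_image :: "(nat \<Rightarrow> real) \<Rightarrow> real \<Rightarrow> (real \<times> real) set" where
  "momentum_image e h = (\<lambda>L. (eta1 e L, eta2 e L)) ` M_h h"

definition polyA :: "(nat \<Rightarrow> real) \<Rightarrow> real \<Rightarrow> real" where
  "polyA e z = (\<Prod>k\<in>{1..4}. z - e k)"

definition polyR :: "real \<Rightarrow> real \<Rightarrow> real \<Rightarrow> real \<Rightarrow> real" where
  "polyR h n1 n2 z = 2 * h * z\<^sup>2 - n1 * z + n2"

definition mom_p :: "(nat \<Rightarrow> real) \<Rightarrow> real \<Rightarrow> real \<Rightarrow> real \<Rightarrow> real \<Rightarrow> real" where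
  "mom_p e h n1 n2 s = sqrt (- polyR h n1 n2 s / (4 * polyA e s))"

end

theory Submission
  imports Defs "HOL-Complex_Analysis.Complex_Analysis"
begin

text \<open>Let \<open>G(z) = sqrt ((z - r1) (z - r2) / A(z))\<close> (\<open>sqrt_quot\<close> below), each square-root
  factor taken with its branch cut in the lower half-plane. On the real axis \<open>G\<close> is real outside
  the three integration intervals and equals \<open>-\<i> sqrt \<bar>(x - r1) (x - r2) / A(x)\<bar>\<close> on them; for
  this sign pattern one needs \<open>r1 \<le> e3\<close> and \<open>e2 \<le> r2\<close>, which follow from the Pluecker relation
  by Cauchy--Schwarz. Since \<open>G(z) = 1/z + O(1/z\<^sup>2)\<close>, Cauchy's theorem on large squares (with
  dominated convergence to reach the real axis) shows that \<open>- Im G\<close> and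
  \<open>- Im (1/(x + \<i>)) = 1/(1 + x\<^sup>2)\<close> have the same integral \<open>pi\<close> over the real line. As
  \<open>p = sqrt (h/2) \<bar>G\<bar>\<close> on the intervals, \<open>J1 + J2 + J3 = (2/pi) sqrt (h/2) pi = sqrt (2 h)\<close>.\<close>

section \<open>A branch of the square root on the upper half-plane\<close>

text \<open>The cut lies along the negative imaginary axis, so \<open>upper_sqrt\<close> is continuous on the closed
  upper half-plane minus \<open>0\<close>.\<close>
definition upper_sqrt :: "complex \<Rightarrow> complex" where
  "upper_sqrt w = (1 + \<i>) / of_real (sqrt 2) * csqrt (- \<i> * w)"

lemma upper_sqrt_power2 [simp]: "(upper_sqrt w)\<^sup>2 = w"
proof -
  have "((1 + \<i>) / of_real (sqrt 2))\<^sup>2 = \<i>"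
    by (simp add: power2_eq_square field_simps complex_eq_iff)
  then show ?thesis
    unfolding upper_sqrt_def power_mult_distrib by simp
qed

lemma norm_upper_sqrt [simp]: "norm (upper_sqrt w) = sqrt (norm w)"
proof -
  have "norm ((1 + \<i>) / of_real (sqrt 2)) = 1"
    by (simp add: norm_divide cmod_def power_divide)
  then show ?thesis
    unfolding upper_sqrt_def norm_mult by (simp add: norm_mult)
qed

lemma upper_sqrt_eq_0_iff [simp]: "upper_sqrt w = 0 \<longleftrightarrow> w = 0"
  by (metis norm_upper_sqrt norm_eq_zero real_sqrt_eq_zero_cancel_iff)

lemma upper_sqrt_of_real:
  "upper_sqrt (of_real t) = (if 0 \<le> t then 1 else \<i>) * of_real (sqrt \<bar>t\<bar>)"
proof -
  define c where "c = (if 0 \<le> t then 1 - \<i> else 1 + \<i>) / of_real (sqrt 2) * of_real (sqrt \<bar>t\<bar>)"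
  have csqrt_eq: "csqrt (- \<i> * of_real t) = c"
  proof (cases "t = 0")
    case False
    show ?thesis
    proof (rule csqrt_unique)
      show "c\<^sup>2 = - \<i> * of_real t"
        by (simp add: c_def power2_eq_square field_simps complex_eq_iff)
      show "0 < Re c \<or> Re c = 0 \<and> 0 \<le> Im c"
        using False by (simp add: c_def)
    qed
  qed (simp add: c_def)
  show ?thesis
    unfolding upper_sqrt_def csqrt_eq c_def
    by (cases "0 \<le> t") (simp_all add: field_simps complex_eq_iff)
qed

lemma holomorphic_on_upper_sqrt: "upper_sqrt holomorphic_on {w. 0 < Im w}"
  unfolding upper_sqrt_def
  by (intro holomorphic_intros) (auto simp: complex_nonpos_Reals_iff)

lemma isCont_upper_sqrt:
  assumes "0 \<le> Im w" "w \<noteq> 0"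
  shows "isCont upper_sqrt w"
proof -
  have "- \<i> * w \<notin> \<real>\<^sub>\<le>\<^sub>0"
    using assms by (auto simp: complex_nonpos_Reals_iff complex_eq_iff)
  then show ?thesis
    unfolding upper_sqrt_def
    by (intro continuous_intros continuous_at_compose[of _ "\<lambda>w. - \<i> * w" csqrt, unfolded o_def]
          continuous_at_csqrt)
qed

lemma abs_Im_csqrt_less_Re:
  assumes "0 < Re z"
  shows "\<bar>Im (csqrt z)\<bar> < Re (csqrt z)"
proof -
  obtain w where w: "w = csqrt z" by blast
  have "w\<^sup>2 = z" unfolding w by simp
  then have "Re z = (Re w)\<^sup>2 - (Im w)\<^sup>2" by (auto simp: power2_eq_square)
  with assms have "(Im w)\<^sup>2 < (Re w)\<^sup>2" by simp
  moreover have "0 \<le> Re w" unfolding w by (rule Re_csqrt)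
  ultimately show ?thesis unfolding w[symmetric]
    by (metis abs_of_nonneg abs_le_square_iff not_le)
qed

text \<open>Both square roots lie in the sector \<open>\<bar>arg\<bar> < pi/4\<close>, so their quotient \<open>t\<close> has positive
  real part; hence \<open>\<bar>t + 1\<bar> \<ge> 1\<close> and \<open>\<bar>t - 1\<bar> \<le> \<bar>t\<^sup>2 - 1\<bar>\<close>.\<close>
lemma norm_upper_sqrt_ratio_minus_1_le:
  assumes "0 < Im p" "0 < Im q"
  shows "norm (upper_sqrt p / upper_sqrt q - 1) \<le> norm (p / q - 1)"
proof -
  define u v where "u = csqrt (- \<i> * p)" and "v = csqrt (- \<i> * q)"
  define t where "t = upper_sqrt p / upper_sqrt q"
  have u: "\<bar>Im u\<bar> < Re u" unfolding u_def by (rule abs_Im_csqrt_less_Re) (use assms in simp)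
  have v: "\<bar>Im v\<bar> < Re v" unfolding v_def by (rule abs_Im_csqrt_less_Re) (use assms in simp)
  have "\<bar>Im u * Im v\<bar> < Re u * Re v"
    using u v by (simp add: abs_mult mult_strict_mono')
  then have num: "0 < Re u * Re v + Im u * Im v" by linarith
  have "1 + \<i> \<noteq> 0" by (simp add: complex_eq_iff)
  then have "t = u / v"
    by (simp add: t_def u_def v_def upper_sqrt_def)
  then have "Re t = (Re u * Re v + Im u * Im v) / (norm v)\<^sup>2"
    by (simp only: Re_divide')
  also have "\<dots> > 0"
    using num v by (intro divide_pos_pos) auto
  finally have "1 \<le> Re (t + 1)" by simp
  also have "\<dots> \<le> norm (t + 1)" by (rule complex_Re_le_cmod)
  finally have "norm (t - 1) * 1 \<le> norm (t - 1) * norm (t + 1)"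
    by (rule mult_left_mono) simp
  then have ineq: "norm (t - 1) \<le> norm (t - 1) * norm (t + 1)"
    by (simp only: mult_1_right)
  have t2: "t\<^sup>2 = p / q"
    unfolding t_def power_divide upper_sqrt_power2 ..
  have "p / q - 1 = (t - 1) * (t + 1)"
    unfolding t2[symmetric] by (simp add: power2_eq_square algebra_simps)
  then have eq: "norm (p / q - 1) = norm (t - 1) * norm (t + 1)"
    by (simp only: norm_mult)
  have "norm (upper_sqrt p / upper_sqrt q - 1) = norm (t - 1)"
    unfolding t_def ..
  also have "\<dots> \<le> norm (t - 1) * norm (t + 1)"
    by (rule ineq)
  also have "\<dots> = norm (p / q - 1)"
    by (rule eq[symmetric])
  finally show ?thesis .
qed

lemma norm_prod_list_minus_1_le:
  fixes ws :: "'a :: real_normed_algebra_1 list"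
  assumes "\<And>w. w \<in> set ws \<Longrightarrow> norm (w - 1) \<le> d"
  shows "norm (prod_list ws - 1) \<le> (1 + d) ^ length ws - 1"
  using assms
proof (induction ws)
  case Nil
  then show ?case by simp
next
  case (Cons w ws)
  define n where "n = length ws"
  have IH: "norm (prod_list ws - 1) \<le> (1 + d) ^ n - 1"
    unfolding n_def using Cons by simp
  have w: "norm (w - 1) \<le> d" using Cons.prems by simp
  then have "0 \<le> d" using norm_ge_zero order_trans by blast
  have "norm (prod_list ws) \<le> (1 + d) ^ n"
    using IH norm_triangle_ineq2[of "prod_list ws" 1] by simp
  have "norm (w * prod_list ws - 1) = norm ((w - 1) * prod_list ws + (prod_list ws - 1))"
    by (simp add: algebra_simps)
  also have "\<dots> \<le> norm (w - 1) * norm (prod_list ws) + norm (prod_list ws - 1)"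
    by (intro norm_triangle_le add_right_mono norm_mult_ineq)
  also have "\<dots> \<le> d * (1 + d) ^ n + ((1 + d) ^ n - 1)"
    by (intro add_mono mult_mono w IH \<open>norm (prod_list ws) \<le> (1 + d) ^ n\<close>) (use \<open>0 \<le> d\<close> in auto)
  also have "\<dots> = (1 + d) ^ length (w # ws) - 1"
    by (simp add: n_def algebra_simps)
  finally show ?case by simp
qed

lemma integrable_inv_sqrt_dist:
  fixes a c d :: real
  shows "(\<lambda>x. 1 / sqrt \<bar>x - a\<bar>) integrable_on {c..d}"
proof -
  define c' d' where "c' = min c a" and "d' = max d a"
  have right: "((\<lambda>x. 1 / sqrt \<bar>x - a\<bar>) has_integral 2 * sqrt (d' - a) - 2 * sqrt (a - a)) {a..d'}"
  proof (rule fundamental_theorem_of_calculus_interior)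
    show "continuous_on {a..d'} (\<lambda>x. 2 * sqrt (x - a))" by (intro continuous_intros)
    fix x assume "x \<in> {a<..<d'}"
    then have "((\<lambda>x. 2 * sqrt (x - a)) has_real_derivative 1 / sqrt \<bar>x - a\<bar>) (at x)"
      by (auto intro!: derivative_eq_intros simp: field_simps)
    then show "((\<lambda>x. 2 * sqrt (x - a)) has_vector_derivative 1 / sqrt \<bar>x - a\<bar>) (at x)"
      by (simp add: has_real_derivative_iff_has_vector_derivative)
  qed (simp add: d'_def)
  have left: "((\<lambda>x. 1 / sqrt \<bar>x - a\<bar>) has_integral - 2 * sqrt (a - a) - (- 2 * sqrt (a - c'))) {c'..a}"
  proof (rule fundamental_theorem_of_calculus_interior)
    show "continuous_on {c'..a} (\<lambda>x. - 2 * sqrt (a - x))" by (intro continuous_intros)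
    fix x assume "x \<in> {c'<..<a}"
    then have "((\<lambda>x. - 2 * sqrt (a - x)) has_real_derivative 1 / sqrt \<bar>x - a\<bar>) (at x)"
      by (auto intro!: derivative_eq_intros simp: field_simps)
    then show "((\<lambda>x. - 2 * sqrt (a - x)) has_vector_derivative 1 / sqrt \<bar>x - a\<bar>) (at x)"
      by (simp add: has_real_derivative_iff_has_vector_derivative)
  qed (simp add: c'_def)
  have "(\<lambda>x. 1 / sqrt \<bar>x - a\<bar>) integrable_on {c'..d'}"
    using left right
    by (intro Henstock_Kurzweil_Integration.integrable_combine[of c' a d']) (auto simp: c'_def d'_def)
  then show ?thesis
    by (rule integrable_subinterval_real) (auto simp: c'_def d'_def)
qed

text \<open>Among \<open>\<delta>\<close>-separated points at most one is closer than \<open>\<delta>/2\<close> to \<open>x\<close>.\<close>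
lemma prod_inv_sqrt_dist_le:
  fixes a :: "'i \<Rightarrow> real"
  assumes "finite K" "K \<noteq> {}" "0 < \<delta>"
    and sep: "\<And>i j. i \<in> K \<Longrightarrow> j \<in> K \<Longrightarrow> i \<noteq> j \<Longrightarrow> \<delta> \<le> \<bar>a i - a j\<bar>"
    and x: "x \<notin> a ` K"
  shows "(\<Prod>k\<in>K. 1 / sqrt \<bar>x - a k\<bar>)
    \<le> (1 / sqrt (\<delta> / 2)) ^ (card K - 1) * (\<Sum>k\<in>K. 1 / sqrt \<bar>x - a k\<bar>)"
proof -
  define u where "u k = 1 / sqrt \<bar>x - a k\<bar>" for k
  define m where "m = 1 / sqrt (\<delta> / 2)"
  have u_pos: "0 < u k" if "k \<in> K" for k
    using x that by (auto simp: u_def)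
  obtain j where j: "j \<in> K" and far: "\<And>i. i \<in> K - {j} \<Longrightarrow> \<delta> / 2 \<le> \<bar>x - a i\<bar>"
  proof (cases "\<exists>j\<in>K. \<bar>x - a j\<bar> < \<delta> / 2")
    case True
    then obtain j where "j \<in> K" "\<bar>x - a j\<bar> < \<delta> / 2" by blast
    moreover have "\<delta> / 2 \<le> \<bar>x - a i\<bar>" if "i \<in> K - {j}" for i
    proof -
      have "\<delta> \<le> \<bar>a i - a j\<bar>" using sep[of i j] that \<open>j \<in> K\<close> by blast
      then show ?thesis using \<open>\<bar>x - a j\<bar> < \<delta> / 2\<close> by arith
    qed
    ultimately show ?thesis using that by blast
  next
    case False
    with \<open>K \<noteq> {}\<close> that show ?thesis by (auto simp: not_less)
  qed
  have "u i \<le> m" if "i \<in> K - {j}" for i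
    unfolding u_def m_def using far[OF that] \<open>0 < \<delta>\<close>
    by (intro divide_left_mono real_sqrt_le_mono mult_pos_pos) auto
  then have "(\<Prod>i\<in>K - {j}. u i) \<le> (\<Prod>i\<in>K - {j}. m)"
    using u_pos by (intro prod_mono) (auto simp: less_imp_le)
  then have "(\<Prod>i\<in>K - {j}. u i) \<le> m ^ card (K - {j})"
    by simp
  moreover have "u j \<le> (\<Sum>k\<in>K. u k)"
    using \<open>finite K\<close> j u_pos by (intro member_le_sum) (auto simp: less_imp_le)
  ultimately have "u j * (\<Prod>i\<in>K - {j}. u i) \<le> (\<Sum>k\<in>K. u k) * m ^ card (K - {j})"
    using u_pos j by (intro mult_mono prod_nonneg) (auto simp: less_imp_le intro: sum_nonneg)
  then show ?thesis
    using \<open>finite K\<close> j by (simp add: u_def m_def prod.remove card_Diff_singleton mult.commute)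
qed

lemma norm_contour_integral_linepath_le:
  assumes "H holomorphic_on S" "open S" "closed_segment a b \<subseteq> S"
    and "\<And>w. w \<in> closed_segment a b \<Longrightarrow> norm (H w) \<le> B"
  shows "norm (contour_integral (linepath a b) H) \<le> B * norm (b - a)"
proof (rule has_contour_integral_bound_linepath)
  show "(H has_contour_integral contour_integral (linepath a b) H) (linepath a b)"
    using assms(1-3) by (intro has_contour_integral_integral contour_integrable_holomorphic_simple) auto
  have "norm (H a) \<le> B"
    by (rule assms(4)) simp
  then show "0 \<le> B"
    by (rule order_trans[OF norm_ge_zero])
qed (rule assms(4))

lemma integral_real_segment_eq_square_sides:
  fixes H :: "complex \<Rightarrow> complex"
  assumes holo: "H holomorphic_on {w. - \<epsilon> < Im w}" and "0 < \<epsilon>" "0 < \<rho>"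
  defines "p3 \<equiv> of_real \<rho> + \<i> * of_real \<rho>" and "p4 \<equiv> - of_real \<rho> + \<i> * of_real \<rho>"
  shows "integral {-\<rho>..\<rho>} (\<lambda>x. H (of_real x)) = - (contour_integral (linepath (of_real \<rho>) p3) H
    + contour_integral (linepath p3 p4) H + contour_integral (linepath p4 (- of_real \<rho>)) H)"
proof -
  define S where "S = {w. - \<epsilon> < Im w}"
  define p1 p2 :: complex where "p1 = - of_real \<rho>" and "p2 = of_real \<rho>"
  let ?I = "\<lambda>a b. contour_integral (linepath a b) H"
  have "convex S" "open S"
    unfolding S_def by (simp_all add: convex_halfspace_Im_gt open_halfspace_Im_gt)
  have corners: "p1 \<in> S" "p2 \<in> S" "p3 \<in> S" "p4 \<in> S"
    unfolding S_def p1_def p2_def p3_def p4_def using assms by auto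
  have segment_S: "closed_segment a b \<subseteq> S" if "a \<in> S" "b \<in> S" for a b
    using closed_segment_subset[OF that \<open>convex S\<close>] .
  have has_I: "(H has_contour_integral ?I a b) (linepath a b)" if "a \<in> S" "b \<in> S" for a b
    using holo segment_S[OF that] \<open>open S\<close> unfolding S_def
    by (intro has_contour_integral_integral contour_integrable_holomorphic_simple) auto
  define square where "square = linepath p1 p2 +++ linepath p2 p3 +++ linepath p3 p4 +++ linepath p4 p1"
  have "(H has_contour_integral ?I p1 p2 + (?I p2 p3 + (?I p3 p4 + ?I p4 p1))) square"
    unfolding square_def by (intro has_contour_integral_join has_I corners valid_path_join) auto
  moreover have "(H has_contour_integral 0) square"
  proof (rule Cauchy_theorem_convex_simple[OF holo[folded S_def] \<open>convex S\<close>])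
    show "valid_path square" unfolding square_def by (intro valid_path_join) auto
    show "path_image square \<subseteq> S"
      unfolding square_def using segment_S corners by (simp add: path_image_join)
  qed (simp add: square_def)
  ultimately have "?I p1 p2 + (?I p2 p3 + (?I p3 p4 + ?I p4 p1)) = 0"
    by (rule has_contour_integral_unique)
  moreover have "?I p1 p2 = integral {-\<rho>..\<rho>} (\<lambda>x. H (of_real x))"
    unfolding p1_def p2_def using \<open>0 < \<rho>\<close> by (subst contour_integral_linepath_Reals_eq) auto
  ultimately show ?thesis
    unfolding p1_def p2_def by (simp only: eq_neg_iff_add_eq_0 add.assoc)
qed

text \<open>The three sides other than the base have total length \<open>4 \<rho>\<close> and lie where the bound
  holds.\<close>
lemma norm_integral_real_segment_le:
  fixes H :: "complex \<Rightarrow> complex"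
  assumes holo: "H holomorphic_on {w. - \<epsilon> < Im w}" and "0 < \<epsilon>" "0 < \<rho>"
    and bound: "\<And>w. 0 \<le> Im w \<Longrightarrow> \<rho> \<le> norm w \<Longrightarrow> norm (H w) \<le> B"
  shows "norm (integral {-\<rho>..\<rho>} (\<lambda>x. H (of_real x))) \<le> 4 * \<rho> * B"
proof -
  define p2 p3 p4 p1 :: complex
    where "p2 = of_real \<rho>" and "p3 = of_real \<rho> + \<i> * of_real \<rho>"
      and "p4 = - of_real \<rho> + \<i> * of_real \<rho>" and "p1 = - of_real \<rho>"
  let ?I = "\<lambda>a b. contour_integral (linepath a b) H"
  have side: "norm (?I a b) \<le> B * norm (b - a)"
    if "convex C" "a \<in> C" "b \<in> C" "C \<subseteq> {w. 0 \<le> Im w \<and> \<rho> \<le> norm w}" for a b C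
  proof (rule norm_contour_integral_linepath_le[OF holo open_halfspace_Im_gt])
    show "closed_segment a b \<subseteq> {w. - \<epsilon> < Im w}"
      using closed_segment_subset[OF that(2,3,1)] that(4) \<open>0 < \<epsilon>\<close> by force
    show "norm (H w) \<le> B" if "w \<in> closed_segment a b" for w
      using closed_segment_subset[OF \<open>a \<in> C\<close> \<open>b \<in> C\<close> \<open>convex C\<close>] that \<open>C \<subseteq> _\<close> bound by blast
  qed
  have s23: "norm (?I p2 p3) \<le> B * norm (p3 - p2)"
  proof (rule side)
    show "convex ({w. \<rho> \<le> Re w} \<inter> {w. 0 \<le> Im w})"
      by (intro convex_Int convex_halfspace_Re_ge convex_halfspace_Im_ge)
    show "{w. \<rho> \<le> Re w} \<inter> {w. 0 \<le> Im w} \<subseteq> {w. 0 \<le> Im w \<and> \<rho> \<le> norm w}"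
      by (auto intro: order_trans[OF _ complex_Re_le_cmod])
  qed (use \<open>0 < \<rho>\<close> in \<open>auto simp: p2_def p3_def\<close>)
  have s34: "norm (?I p3 p4) \<le> B * norm (p4 - p3)"
  proof (rule side)
    show "convex {w. \<rho> \<le> Im w}"
      by (rule convex_halfspace_Im_ge)
    show "{w. \<rho> \<le> Im w} \<subseteq> {w. 0 \<le> Im w \<and> \<rho> \<le> norm w}"
      using \<open>0 < \<rho>\<close> by (auto intro: order_trans[OF _ abs_Im_le_cmod])
  qed (auto simp: p3_def p4_def)
  have s41: "norm (?I p4 p1) \<le> B * norm (p1 - p4)"
  proof (rule side)
    show "convex ({w. Re w \<le> - \<rho>} \<inter> {w. 0 \<le> Im w})"
      by (intro convex_Int convex_halfspace_Re_le convex_halfspace_Im_ge)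
    show "{w. Re w \<le> - \<rho>} \<inter> {w. 0 \<le> Im w} \<subseteq> {w. 0 \<le> Im w \<and> \<rho> \<le> norm w}"
      by (auto intro: order_trans[OF _ abs_Re_le_cmod])
  qed (use \<open>0 < \<rho>\<close> in \<open>auto simp: p4_def p1_def\<close>)
  have lengths: "norm (p3 - p2) = \<rho>" "norm (p4 - p3) = 2 * \<rho>" "norm (p1 - p4) = \<rho>"
    using \<open>0 < \<rho>\<close> by (simp_all add: p1_def p2_def p3_def p4_def norm_mult)
  have "norm (?I p2 p3) + norm (?I p3 p4) + norm (?I p4 p1) \<le> B * \<rho> + B * (2 * \<rho>) + B * \<rho>"
    using s23 s34 s41 unfolding lengths by (intro add_mono)
  also have "\<dots> = 4 * \<rho> * B"
    by (simp add: algebra_simps)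
  finally have "norm (?I p2 p3) + norm (?I p3 p4) + norm (?I p4 p1) \<le> 4 * \<rho> * B" .
  moreover have "integral {-\<rho>..\<rho>} (\<lambda>x. H (of_real x)) = - (?I p2 p3 + ?I p3 p4 + ?I p4 p1)"
    unfolding p1_def p2_def p3_def p4_def by (rule integral_real_segment_eq_square_sides[OF assms(1-3)])
  then have "norm (integral {-\<rho>..\<rho>} (\<lambda>x. H (of_real x)))
      \<le> norm (?I p2 p3) + norm (?I p3 p4) + norm (?I p4 p1)"
    by (simp only: norm_minus_cancel)
      (rule order_trans[OF norm_triangle_ineq add_right_mono[OF norm_triangle_ineq]])
  ultimately show ?thesis by linarith
qed

section \<open>The branch of \<open>sqrt ((z - r1) (z - r2) / A(z))\<close>\<close>

lemma atLeastAtMost_1_4: "{1..4::nat} = {1, 2, 3, 4}"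
  by auto

lemma prod_1_4: "(\<Prod>k\<in>{1..4::nat}. f k) = f 1 * f 2 * f 3 * f 4"
  unfolding atLeastAtMost_1_4 by (simp add: mult_ac)

definition sqrt_quot :: "(nat \<Rightarrow> real) \<Rightarrow> real \<Rightarrow> real \<Rightarrow> complex \<Rightarrow> complex" where
  "sqrt_quot a r1 r2 z = upper_sqrt (z - of_real r1) * upper_sqrt (z - of_real r2) /
     (\<Prod>k\<in>{1..4}. upper_sqrt (z - of_real (a k)))"

definition rad_quot :: "(nat \<Rightarrow> real) \<Rightarrow> real \<Rightarrow> real \<Rightarrow> real \<Rightarrow> real" where
  "rad_quot a r1 r2 x = (x - r1) * (x - r2) / polyA a x"

definition branch_points :: "(nat \<Rightarrow> real) \<Rightarrow> real \<Rightarrow> real \<Rightarrow> real set" where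
  "branch_points a r1 r2 = {r1, r2} \<union> a ` {1..4}"

definition allowed_region :: "(nat \<Rightarrow> real) \<Rightarrow> real \<Rightarrow> real \<Rightarrow> real set" where
  "allowed_region a r1 r2 =
     {a 1..min r1 (a 2)} \<union> {max r1 (a 2)..min r2 (a 3)} \<union> {max r2 (a 3)..a 4}"

lemma finite_branch_points: "finite (branch_points a r1 r2)"
  by (simp add: branch_points_def)

lemma sqrt_quot_of_real_power2:
  "(sqrt_quot a r1 r2 (of_real x))\<^sup>2 = of_real (rad_quot a r1 r2 x)"
  unfolding sqrt_quot_def rad_quot_def polyA_def
  by (simp add: power_divide power_mult_distrib prod_power_distrib)

lemma norm_sqrt_quot_of_real:
  "norm (sqrt_quot a r1 r2 (of_real x)) = sqrt \<bar>rad_quot a r1 r2 x\<bar>"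
proof -
  have "\<bar>rad_quot a r1 r2 x\<bar> = (norm (sqrt_quot a r1 r2 (of_real x)))\<^sup>2"
    by (metis norm_of_real norm_power sqrt_quot_of_real_power2)
  then show ?thesis by simp
qed

lemma Im_sqrt_quot_of_real:
  assumes "a 1 < a 2" "a 2 < a 3" "a 3 < a 4" "a 1 \<le> r1" "r1 \<le> r2" "r2 \<le> a 4" "r1 \<le> a 3" "a 2 \<le> r2"
    and "x \<notin> branch_points a r1 r2"
  shows "Im (sqrt_quot a r1 r2 (of_real x)) =
    (if x \<in> allowed_region a r1 r2 then - sqrt \<bar>rad_quot a r1 r2 x\<bar> else 0)"
proof -
  define ph where "ph c = (if c \<le> x then 1 else \<i>)" for c
  define M where "M = sqrt \<bar>x - r1\<bar> * sqrt \<bar>x - r2\<bar> /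
    (sqrt \<bar>x - a 1\<bar> * sqrt \<bar>x - a 2\<bar> * sqrt \<bar>x - a 3\<bar> * sqrt \<bar>x - a 4\<bar>)"
  define phase where "phase = ph r1 * ph r2 / (ph (a 1) * ph (a 2) * ph (a 3) * ph (a 4))"
  have factor: "upper_sqrt (of_real x - of_real c) = ph c * of_real (sqrt \<bar>x - c\<bar>)" for c
    unfolding ph_def of_real_diff[symmetric] upper_sqrt_of_real by simp
  have G: "sqrt_quot a r1 r2 (of_real x) = phase * of_real M"
    unfolding sqrt_quot_def prod_1_4 factor phase_def M_def by (simp add: field_simps)
  have "norm phase = 1"
    by (simp add: phase_def ph_def norm_divide norm_mult)
  moreover have "0 \<le> M" by (simp add: M_def)
  ultimately have "norm (sqrt_quot a r1 r2 (of_real x)) = M"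
    unfolding G norm_mult by simp
  then have "M = sqrt \<bar>rad_quot a r1 r2 x\<bar>"
    using norm_sqrt_quot_of_real[of a r1 r2 x] by linarith
  moreover have "Im phase = (if x \<in> allowed_region a r1 r2 then -1 else 0)"
    using assms unfolding phase_def ph_def allowed_region_def branch_points_def
    by (auto simp: image_iff)
  ultimately show ?thesis
    unfolding G by simp
qed

lemma rad_quot_nonpos_on_allowed_region:
  assumes "a 1 < a 2" "a 2 < a 3" "a 3 < a 4" "a 1 \<le> r1" "r1 \<le> r2" "r2 \<le> a 4" "r1 \<le> a 3" "a 2 \<le> r2"
    and "x \<in> allowed_region a r1 r2" "x \<notin> branch_points a r1 r2"
  shows "rad_quot a r1 r2 x \<le> 0"
proof -
  define G where "G = sqrt_quot a r1 r2 (of_real x)"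
  define W where "W = sqrt \<bar>rad_quot a r1 r2 x\<bar>"
  have "Im G = - W"
    using Im_sqrt_quot_of_real[OF assms(1-8,10)] assms(9) by (simp add: G_def W_def)
  moreover have "(Re G)\<^sup>2 + (Im G)\<^sup>2 = W\<^sup>2"
    using norm_sqrt_quot_of_real[of a r1 r2 x] by (simp add: G_def W_def cmod_power2[symmetric])
  ultimately have "G = - \<i> * of_real W"
    by (simp add: complex_eq_iff)
  then have "of_real (rad_quot a r1 r2 x) = - (of_real (W\<^sup>2) :: complex)"
    using sqrt_quot_of_real_power2[of a r1 r2 x] by (simp add: G_def power_mult_distrib)
  then have "rad_quot a r1 r2 x = - W\<^sup>2"
    by (metis of_real_eq_iff of_real_minus)
  then show ?thesis by simp
qed

lemma holomorphic_on_sqrt_quot: "sqrt_quot a r1 r2 holomorphic_on {z. 0 < Im z}"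
proof -
  have "(upper_sqrt \<circ> (\<lambda>z. z - of_real c)) holomorphic_on {z. 0 < Im z}" for c
    by (rule holomorphic_on_compose_gen[OF _ holomorphic_on_upper_sqrt]) (auto intro!: holomorphic_intros)
  then have factor: "(\<lambda>z. upper_sqrt (z - of_real c)) holomorphic_on {z. 0 < Im z}" for c
    by (simp add: o_def)
  have "upper_sqrt (z - of_real c) \<noteq> 0" if "0 < Im z" for z c
    unfolding upper_sqrt_eq_0_iff using that by (auto simp: complex_eq_iff)
  then show ?thesis
    unfolding sqrt_quot_def[abs_def] by (intro holomorphic_intros factor) auto
qed

lemma isCont_sqrt_quot_of_real:
  assumes "x \<notin> branch_points a r1 r2"
  shows "isCont (sqrt_quot a r1 r2) (of_real x)"
proof -
  have factor: "isCont (\<lambda>z. upper_sqrt (z - of_real c)) (of_real x)" if "c \<noteq> x" for c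
  proof -
    have "isCont upper_sqrt (of_real x - of_real c)"
      using that by (intro isCont_upper_sqrt) auto
    then show ?thesis
      by (intro continuous_at_compose[of _ "\<lambda>z. z - of_real c" upper_sqrt, unfolded o_def]
          continuous_intros)
  qed
  show ?thesis
    using assms unfolding sqrt_quot_def[abs_def] branch_points_def
    by (intro continuous_intros factor) auto
qed

lemma norm_upper_sqrt_shift_ratio_minus_1_le:
  assumes "0 < Im z" "\<bar>b\<bar> + \<bar>c\<bar> \<le> D" "2 * D \<le> norm z" "0 < D"
  shows "norm (upper_sqrt (z - of_real b) / upper_sqrt (z - of_real c) - 1) \<le> 2 * D / norm z"
proof -
  have "z - of_real c \<noteq> 0"
    using \<open>0 < Im z\<close> by (auto simp: complex_eq_iff)
  have "norm (upper_sqrt (z - of_real b) / upper_sqrt (z - of_real c) - 1)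
      \<le> norm ((z - of_real b) / (z - of_real c) - 1)"
    using \<open>0 < Im z\<close> by (intro norm_upper_sqrt_ratio_minus_1_le) auto
  also have "(z - of_real b) / (z - of_real c) - 1 = of_real (c - b) / (z - of_real c)"
    using \<open>z - of_real c \<noteq> 0\<close> by (simp add: field_simps)
  also have "norm \<dots> = \<bar>c - b\<bar> / norm (z - of_real c)"
    by (simp add: norm_divide del: of_real_diff)
  also have "\<dots> \<le> D / (norm z / 2)"
  proof (rule frac_le)
    have "norm z - \<bar>c\<bar> \<le> norm (z - of_real c)"
      using norm_triangle_ineq2[of z "of_real c"] by simp
    then show "norm z / 2 \<le> norm (z - of_real c)"
      using assms(2,3) by linarith
  qed (use assms in auto)
  also have "\<dots> = 2 * D / norm z"
    by simp
  finally show ?thesis .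
qed

lemma norm_inverse_minus_inverse_plus_i_le:
  assumes "0 < Im z"
  shows "norm (1 / z - 1 / (z + \<i>)) \<le> 1 / (norm z)\<^sup>2"
proof -
  have "z \<noteq> 0" "z + \<i> \<noteq> 0" using assms by (auto simp: complex_eq_iff)
  have "norm z \<le> norm (z + \<i>)"
    using assms by (auto simp: cmod_def intro!: real_sqrt_le_mono)
  have "1 / z - 1 / (z + \<i>) = \<i> / (z * (z + \<i>))"
    using \<open>z \<noteq> 0\<close> \<open>z + \<i> \<noteq> 0\<close> by (auto simp: field_simps)
  then have "norm (1 / z - 1 / (z + \<i>)) = 1 / (norm z * norm (z + \<i>))"
    by (simp add: norm_divide norm_mult)
  also have "\<dots> \<le> 1 / (norm z)\<^sup>2"
    using \<open>z \<noteq> 0\<close> \<open>norm z \<le> norm (z + \<i>)\<close>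
    by (auto simp: power2_eq_square intro!: divide_left_mono mult_left_mono mult_pos_pos)
  finally show ?thesis .
qed

lemma one_plus_power4_minus_1_le:
  fixes d :: real
  assumes "0 \<le> d" "d \<le> 1"
  shows "(1 + d) ^ 4 - 1 \<le> 15 * d"
proof -
  have "d\<^sup>2 \<le> 1" "d ^ 3 \<le> 1"
    using assms by (simp_all add: power_le_one)
  then have "d * (4 + 6 * d + 4 * d\<^sup>2 + d ^ 3) \<le> d * 15"
    using assms by (intro mult_left_mono) auto
  then show ?thesis
    by (simp add: algebra_simps power2_eq_square power3_eq_cube power4_eq_xxxx)
qed

text \<open>Near infinity \<open>sqrt_quot\<close> behaves like \<open>1/z\<close>; we compare it with \<open>1/(z + \<i>)\<close>, which has
  no pole in the half-plane \<open>Im z > -1\<close>.\<close>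
lemma norm_sqrt_quot_minus_inverse_le:
  assumes "0 < Im z" and D: "\<bar>r1\<bar> + \<bar>r2\<bar> + (\<Sum>k\<in>{1..4}. \<bar>a k\<bar>) \<le> D" "1 \<le> D"
    and "2 * D \<le> norm z"
  shows "norm (sqrt_quot a r1 r2 z - 1 / (z + \<i>)) \<le> 31 * D / (norm z)\<^sup>2"
proof -
  define d where "d = 2 * D / norm z"
  have "0 < norm z" using \<open>1 \<le> D\<close> \<open>2 * D \<le> norm z\<close> by linarith
  have "0 \<le> d" "d \<le> 1"
    unfolding d_def using \<open>1 \<le> D\<close> \<open>2 * D \<le> norm z\<close> \<open>0 < norm z\<close> by auto
  have ak: "\<bar>r1\<bar> + \<bar>r2\<bar> + \<bar>a k\<bar> \<le> D" if "k \<in> {1..4}" for k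
  proof -
    have "\<bar>a k\<bar> \<le> (\<Sum>k\<in>{1..4}. \<bar>a k\<bar>)"
      using that by (intro member_le_sum) auto
    then show ?thesis using D(1) by linarith
  qed
  have ratio: "norm (upper_sqrt (z - of_real b) / upper_sqrt (z - of_real (a k)) - 1) \<le> d"
    if "\<bar>b\<bar> \<le> \<bar>r1\<bar> + \<bar>r2\<bar>" "k \<in> {1..4}" for b k
  proof -
    have "\<bar>b\<bar> + \<bar>a k\<bar> \<le> D"
      using ak[OF that(2)] that(1) by linarith
    then show ?thesis
      unfolding d_def using \<open>1 \<le> D\<close>
      by (intro norm_upper_sqrt_shift_ratio_minus_1_le \<open>0 < Im z\<close> \<open>2 * D \<le> norm z\<close>) auto
  qed
  define ws where "ws = [upper_sqrt z / upper_sqrt (z - of_real (a 1)),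
    upper_sqrt z / upper_sqrt (z - of_real (a 2)),
    upper_sqrt (z - of_real r1) / upper_sqrt (z - of_real (a 3)),
    upper_sqrt (z - of_real r2) / upper_sqrt (z - of_real (a 4))]"
  have "z * sqrt_quot a r1 r2 z = prod_list ws"
  proof -
    have "z = upper_sqrt z * upper_sqrt z"
      by (metis power2_eq_square upper_sqrt_power2)
    moreover have "upper_sqrt (z - of_real (a k)) \<noteq> 0" for k
      unfolding upper_sqrt_eq_0_iff using \<open>0 < Im z\<close> by (auto simp: complex_eq_iff)
    ultimately show ?thesis
      unfolding sqrt_quot_def prod_1_4 ws_def by (simp add: field_simps)
  qed
  moreover have "norm (prod_list ws - 1) \<le> (1 + d) ^ length ws - 1"
    using ratio[of 0 1] ratio[of 0 2] ratio[of r1 3] ratio[of r2 4]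
    by (intro norm_prod_list_minus_1_le) (auto simp: ws_def)
  moreover have "length ws = 4"
    by (simp add: ws_def)
  ultimately have "norm (z * sqrt_quot a r1 r2 z - 1) \<le> 15 * d"
    using one_plus_power4_minus_1_le[OF \<open>0 \<le> d\<close> \<open>d \<le> 1\<close>] by simp
  then have "norm (z * sqrt_quot a r1 r2 z - 1) / norm z \<le> 30 * D / norm z / norm z"
    unfolding d_def by (intro divide_right_mono) auto
  moreover have "sqrt_quot a r1 r2 z - 1 / z = (z * sqrt_quot a r1 r2 z - 1) / z"
    using \<open>0 < norm z\<close> by (auto simp: field_simps)
  ultimately have "norm (sqrt_quot a r1 r2 z - 1 / z) \<le> 30 * D / (norm z)\<^sup>2"
    by (simp add: norm_divide power2_eq_square)
  moreover have "norm (1 / z - 1 / (z + \<i>)) \<le> D / (norm z)\<^sup>2"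
    using norm_inverse_minus_inverse_plus_i_le[OF \<open>0 < Im z\<close>]
    by (rule order_trans) (simp add: divide_right_mono \<open>1 \<le> D\<close>)
  ultimately show ?thesis
    using norm_triangle_ineq[of "sqrt_quot a r1 r2 z - 1 / z" "1 / z - 1 / (z + \<i>)"]
    by (simp add: add_divide_distrib)
qed

section \<open>Integration along the real axis\<close>

lemma norm_sqrt_quot_near_real_le:
  assumes "x \<notin> a ` {1..4}" "0 < \<epsilon>" "\<epsilon> \<le> 1"
  shows "norm (sqrt_quot a r1 r2 (of_real x + \<i> * of_real \<epsilon>))
    \<le> (\<bar>x - r1\<bar> + 1) * (\<bar>x - r2\<bar> + 1) * (\<Prod>k\<in>{1..4}. 1 / sqrt \<bar>x - a k\<bar>)"
proof -
  define z where "z = of_real x + \<i> * of_real \<epsilon>"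
  have numerator: "sqrt (norm (z - of_real c)) \<le> \<bar>x - c\<bar> + 1" for c
  proof -
    have "norm (z - of_real c) \<le> \<bar>x - c\<bar> + 1"
      using cmod_le[of "z - of_real c"] assms(2,3) by (simp add: z_def)
    then have "sqrt (norm (z - of_real c)) \<le> sqrt (\<bar>x - c\<bar> + 1)" by simp
    also have "\<dots> \<le> sqrt (\<bar>x - c\<bar> + 1) * sqrt (\<bar>x - c\<bar> + 1)"
      by (intro mult_le_cancel_left1[THEN iffD2]) auto
    also have "\<dots> = \<bar>x - c\<bar> + 1"
      by simp
    finally show ?thesis .
  qed
  have denominator: "1 / sqrt (norm (z - of_real (a k))) \<le> 1 / sqrt \<bar>x - a k\<bar>" if "k \<in> {1..4}" for k
  proof -
    have "\<bar>x - a k\<bar> \<le> norm (z - of_real (a k))"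
      using abs_Re_le_cmod[of "z - of_real (a k)"] by (simp add: z_def)
    moreover have "0 < \<bar>x - a k\<bar>" using assms(1) that by force
    ultimately show ?thesis by (intro divide_left_mono mult_pos_pos) auto
  qed
  have "norm (sqrt_quot a r1 r2 z) = sqrt (norm (z - of_real r1)) * sqrt (norm (z - of_real r2))
      * (\<Prod>k\<in>{1..4}. 1 / sqrt (norm (z - of_real (a k))))"
    unfolding sqrt_quot_def norm_divide norm_mult prod_norm[symmetric] norm_upper_sqrt
    by (simp add: prod_dividef)
  also have "\<dots> \<le> (\<bar>x - r1\<bar> + 1) * (\<bar>x - r2\<bar> + 1) * (\<Prod>k\<in>{1..4}. 1 / sqrt \<bar>x - a k\<bar>)"
    using denominator by (intro mult_mono numerator prod_mono prod_nonneg) auto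
  finally show ?thesis unfolding z_def .
qed

lemma norm_integral_sqrt_quot_shifted_le:
  assumes "0 < \<epsilon>" and D: "\<bar>r1\<bar> + \<bar>r2\<bar> + (\<Sum>k\<in>{1..4}. \<bar>a k\<bar>) \<le> D" "1 \<le> D"
    and "2 * D \<le> \<rho>"
  shows "norm (integral {-\<rho>..\<rho>} (\<lambda>x. sqrt_quot a r1 r2 (of_real x + \<i> * of_real \<epsilon>)
            - 1 / (of_real x + \<i> * of_real \<epsilon> + \<i>))) \<le> 124 * D / \<rho>"
proof -
  define H where "H w = sqrt_quot a r1 r2 (w + \<i> * of_real \<epsilon>) - 1 / (w + \<i> * of_real \<epsilon> + \<i>)" for w
  have "0 < \<rho>" using D \<open>2 * D \<le> \<rho>\<close> by linarith
  have "H holomorphic_on {w. - \<epsilon> < Im w}"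
  proof -
    have "(sqrt_quot a r1 r2 \<circ> (\<lambda>w. w + \<i> * of_real \<epsilon>)) holomorphic_on {w. - \<epsilon> < Im w}"
      by (rule holomorphic_on_compose_gen[OF _ holomorphic_on_sqrt_quot])
        (auto intro!: holomorphic_intros)
    moreover have "(\<lambda>w. 1 / (w + \<i> * of_real \<epsilon> + \<i>)) holomorphic_on {w. - \<epsilon> < Im w}"
      using \<open>0 < \<epsilon>\<close> by (intro holomorphic_intros) (auto simp: complex_eq_iff)
    ultimately show ?thesis
      unfolding H_def[abs_def] by (simp add: o_def holomorphic_on_diff)
  qed
  moreover have "norm (H w) \<le> 31 * D / \<rho>\<^sup>2" if "0 \<le> Im w" "\<rho> \<le> norm w" for w
  proof -
    define z where "z = w + \<i> * of_real \<epsilon>"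
    have "0 < Im z" using that \<open>0 < \<epsilon>\<close> by (simp add: z_def)
    have "norm w \<le> norm z"
      unfolding z_def cmod_def using that \<open>0 < \<epsilon>\<close> by (auto intro!: real_sqrt_le_mono power_mono)
    have "norm (H w) \<le> 31 * D / (norm z)\<^sup>2"
      unfolding H_def z_def[symmetric]
      by (rule norm_sqrt_quot_minus_inverse_le[OF \<open>0 < Im z\<close> D])
        (use that \<open>norm w \<le> norm z\<close> \<open>2 * D \<le> \<rho>\<close> in linarith)
    also have "\<dots> \<le> 31 * D / \<rho>\<^sup>2"
      using that \<open>norm w \<le> norm z\<close> \<open>0 < \<rho>\<close> \<open>1 \<le> D\<close>
      by (intro divide_left_mono power_mono mult_pos_pos) auto
    finally show ?thesis .
  qed
  ultimately have "norm (integral {-\<rho>..\<rho>} (\<lambda>x. H (of_real x))) \<le> 4 * \<rho> * (31 * D / \<rho>\<^sup>2)"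
    by (intro norm_integral_real_segment_le[OF _ \<open>0 < \<epsilon>\<close> \<open>0 < \<rho>\<close>])
  also have "\<dots> = 124 * D / \<rho>"
    by (simp add: power2_eq_square)
  finally show ?thesis
    by (simp add: H_def)
qed

lemma sqrt_quot_near_real_dominated:
  assumes "a 1 < a 2" "a 2 < a 3" "a 3 < a 4"
  obtains h where "h integrable_on {-\<rho>..\<rho>}" and "\<And>x. 0 \<le> h x"
    and "\<And>x \<epsilon>. x \<in> {-\<rho>..\<rho>} \<Longrightarrow> x \<notin> a ` {1..4} \<Longrightarrow> 0 < \<epsilon> \<Longrightarrow> \<epsilon> \<le> 1 \<Longrightarrow>
      norm (sqrt_quot a r1 r2 (of_real x + \<i> * of_real \<epsilon>) - 1 / (of_real x + \<i> * of_real \<epsilon> + \<i>))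
        \<le> h x"
proof
  define \<delta> where "\<delta> = min (a 2 - a 1) (min (a 3 - a 2) (a 4 - a 3))"
  define C where "C = (\<bar>\<rho>\<bar> + \<bar>r1\<bar> + 1) * (\<bar>\<rho>\<bar> + \<bar>r2\<bar> + 1) * (1 / sqrt (\<delta> / 2)) ^ 3"
  define h where "h x = C * (\<Sum>k\<in>{1..4}. 1 / sqrt \<bar>x - a k\<bar>) + 1" for x
  have "0 < \<delta>" using assms by (simp add: \<delta>_def)
  show "h integrable_on {-\<rho>..\<rho>}"
    unfolding h_def by (intro integrable_add integrable_on_mult_right integrable_sum integrable_inv_sqrt_dist) auto
  show "0 \<le> h x" for x
    using \<open>0 < \<delta>\<close> by (auto simp: h_def C_def intro!: add_nonneg_nonneg mult_nonneg_nonneg sum_nonneg)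
  fix x \<epsilon> :: real
  assume x: "x \<in> {-\<rho>..\<rho>}" "x \<notin> a ` {1..4}" and \<epsilon>: "0 < \<epsilon>" "\<epsilon> \<le> 1"
  have "(\<Prod>k\<in>{1..4}. 1 / sqrt \<bar>x - a k\<bar>)
      \<le> (1 / sqrt (\<delta> / 2)) ^ (card {1..4::nat} - 1) * (\<Sum>k\<in>{1..4}. 1 / sqrt \<bar>x - a k\<bar>)"
  proof (rule prod_inv_sqrt_dist_le[OF _ _ \<open>0 < \<delta>\<close> _ x(2)])
    show "\<delta> \<le> \<bar>a i - a j\<bar>" if "i \<in> {1..4}" "j \<in> {1..4}" "i \<noteq> j" for i j
      using that assms unfolding atLeastAtMost_1_4 \<delta>_def by auto
  qed auto
  then have prod_le: "(\<Prod>k\<in>{1..4}. 1 / sqrt \<bar>x - a k\<bar>)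
      \<le> (1 / sqrt (\<delta> / 2)) ^ 3 * (\<Sum>k\<in>{1..4}. 1 / sqrt \<bar>x - a k\<bar>)"
    by simp
  have "norm (sqrt_quot a r1 r2 (of_real x + \<i> * of_real \<epsilon>))
      \<le> (\<bar>x - r1\<bar> + 1) * (\<bar>x - r2\<bar> + 1) * (\<Prod>k\<in>{1..4}. 1 / sqrt \<bar>x - a k\<bar>)"
    by (rule norm_sqrt_quot_near_real_le[OF x(2) \<epsilon>])
  also have "\<dots> \<le> ((\<bar>\<rho>\<bar> + \<bar>r1\<bar> + 1) * (\<bar>\<rho>\<bar> + \<bar>r2\<bar> + 1))
      * ((1 / sqrt (\<delta> / 2)) ^ 3 * (\<Sum>k\<in>{1..4}. 1 / sqrt \<bar>x - a k\<bar>))"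
    using x(1) prod_le by (intro mult_mono prod_nonneg) auto
  also have "\<dots> = h x - 1"
    by (simp add: h_def C_def mult_ac)
  finally have "norm (sqrt_quot a r1 r2 (of_real x + \<i> * of_real \<epsilon>)) \<le> h x - 1" .
  moreover have "norm (1 / (of_real x + \<i> * of_real \<epsilon> + \<i>)) \<le> 1"
  proof -
    have "1 \<le> \<bar>Im (of_real x + \<i> * of_real \<epsilon> + \<i>)\<bar>" using \<epsilon> by simp
    also have "\<dots> \<le> norm (of_real x + \<i> * of_real \<epsilon> + \<i>)" by (rule abs_Im_le_cmod)
    finally show ?thesis by (simp add: norm_divide divide_le_eq)
  qed
  ultimately show "norm (sqrt_quot a r1 r2 (of_real x + \<i> * of_real \<epsilon>)
      - 1 / (of_real x + \<i> * of_real \<epsilon> + \<i>)) \<le> h x"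
    using norm_triangle_ineq4[of "sqrt_quot a r1 r2 (of_real x + \<i> * of_real \<epsilon>)"
        "1 / (of_real x + \<i> * of_real \<epsilon> + \<i>)"] by linarith
qed

lemma continuous_on_sqrt_quot_shifted:
  assumes "0 < \<epsilon>"
  shows "continuous_on S
    (\<lambda>x. sqrt_quot a r1 r2 (of_real x + \<i> * of_real \<epsilon>) - 1 / (of_real x + \<i> * of_real \<epsilon> + \<i>))"
proof (intro continuous_on_diff)
  have "continuous_on {z. 0 < Im z} (sqrt_quot a r1 r2)"
    by (rule holomorphic_on_imp_continuous_on[OF holomorphic_on_sqrt_quot])
  then show "continuous_on S (\<lambda>x. sqrt_quot a r1 r2 (of_real x + \<i> * of_real \<epsilon>))"
    by (rule continuous_on_compose2) (auto intro!: continuous_intros simp: assms)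
  show "continuous_on S (\<lambda>x. 1 / (of_real x + \<i> * of_real \<epsilon> + \<i>))"
    using assms by (intro continuous_intros) (auto simp: complex_eq_iff)
qed

lemma tendsto_sqrt_quot_shifted:
  assumes "x \<notin> branch_points a r1 r2" and "(\<epsilon> \<longlongrightarrow> 0) F"
  shows "((\<lambda>k. sqrt_quot a r1 r2 (of_real x + \<i> * of_real (\<epsilon> k))
      - 1 / (of_real x + \<i> * of_real (\<epsilon> k) + \<i>))
    \<longlongrightarrow> sqrt_quot a r1 r2 (of_real x) - 1 / (of_real x + \<i>)) F"
proof -
  have "((\<lambda>k. of_real x + \<i> * of_real (\<epsilon> k)) \<longlongrightarrow> of_real x + \<i> * of_real 0) F"
    by (intro tendsto_intros assms(2))
  then have to_x: "((\<lambda>k. of_real x + \<i> * of_real (\<epsilon> k)) \<longlongrightarrow> of_real x) F"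
    by simp
  show ?thesis
    by (intro tendsto_diff isCont_tendsto_compose[OF isCont_sqrt_quot_of_real[OF assms(1)] to_x]
        tendsto_intros to_x) (auto simp: complex_eq_iff)
qed

text \<open>The boundary values of \<open>sqrt_quot\<close> are reached from the shifted lines \<open>Im z = 1/(k+1)\<close>
  by dominated convergence.\<close>
lemma integral_sqrt_quot_real_le:
  assumes "a 1 < a 2" "a 2 < a 3" "a 3 < a 4"
    and D: "\<bar>r1\<bar> + \<bar>r2\<bar> + (\<Sum>k\<in>{1..4}. \<bar>a k\<bar>) \<le> D" "1 \<le> D" and "2 * D \<le> \<rho>"
  defines "g \<equiv> \<lambda>x. sqrt_quot a r1 r2 (of_real x) - 1 / (of_real x + \<i>)"
  shows "g integrable_on {-\<rho>..\<rho>}" and "norm (integral {-\<rho>..\<rho>} g) \<le> 124 * D / \<rho>"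
proof -
  define T where "T = {-\<rho>..\<rho>}"
  define P where "P = branch_points a r1 r2"
  define \<epsilon> where "\<epsilon> k = inverse (real (Suc k))" for k
  define H where "H k x = sqrt_quot a r1 r2 (of_real x + \<i> * of_real (\<epsilon> k))
    - 1 / (of_real x + \<i> * of_real (\<epsilon> k) + \<i>)" for k x
  define off_P where "off_P f x = (if x \<in> P then 0 else f x)" for f :: "real \<Rightarrow> complex" and x
  have "finite P" unfolding P_def by (rule finite_branch_points)
  have \<epsilon>: "0 < \<epsilon> k" "\<epsilon> k \<le> 1" for k
    unfolding \<epsilon>_def by (auto simp: field_simps)
  obtain h where "h integrable_on T" and "\<And>x. 0 \<le> h x"
    and dom: "\<And>x e. x \<in> T \<Longrightarrow> x \<notin> a ` {1..4} \<Longrightarrow> 0 < e \<Longrightarrow> e \<le> 1 \<Longrightarrow>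
      norm (sqrt_quot a r1 r2 (of_real x + \<i> * of_real e) - 1 / (of_real x + \<i> * of_real e + \<i>)) \<le> h x"
    unfolding T_def using sqrt_quot_near_real_dominated[OF assms(1-3)] by metis
  have "H k integrable_on T" for k
    unfolding T_def H_def by (intro integrable_continuous_interval continuous_on_sqrt_quot_shifted \<epsilon>)
  then have H_int: "off_P (H k) integrable_on T" for k
    by (rule integrable_spike_finite[OF \<open>finite P\<close>, rotated]) (simp add: off_P_def)
  have H_bound: "norm (integral T (off_P (H k))) \<le> 124 * D / \<rho>" for k
  proof -
    have "integral T (off_P (H k)) = integral T (H k)"
      by (rule integral_spike[of P]) (auto simp: off_P_def negligible_finite[OF \<open>finite P\<close>])
    then show ?thesis
      unfolding T_def H_def using norm_integral_sqrt_quot_shifted_le[OF \<epsilon>(1) D \<open>2 * D \<le> \<rho>\<close>] by simp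
  qed
  have H_dom: "norm (off_P (H k) x) \<le> h x" if "x \<in> T" for k x
    using that dom[OF that _ \<epsilon>] \<open>0 \<le> h x\<close>
    by (auto simp: off_P_def H_def P_def branch_points_def)
  have H_lim: "(\<lambda>k. off_P (H k) x) \<longlonglongrightarrow> off_P g x" if "x \<in> T" for x
  proof (cases "x \<in> P")
    case False
    have "\<epsilon> \<longlonglongrightarrow> 0"
      unfolding \<epsilon>_def by (rule LIMSEQ_inverse_real_of_nat)
    then show ?thesis
      using False tendsto_sqrt_quot_shifted[of x a r1 r2 \<epsilon>]
      by (simp add: off_P_def H_def g_def P_def)
  qed (simp add: off_P_def)
  note limit = dominated_convergence[OF H_int \<open>h integrable_on T\<close> H_dom H_lim]
  have g_off_P: "g x = off_P g x" if "x \<in> T - P" for x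
    using that by (simp add: off_P_def)
  show "g integrable_on {-\<rho>..\<rho>}"
    using integrable_spike_finite[OF \<open>finite P\<close> g_off_P limit(1)] by (simp add: T_def)
  have "norm (integral T (off_P g)) \<le> 124 * D / \<rho>"
    using tendsto_norm[OF limit(2)] H_bound by (intro LIMSEQ_le_const2) auto
  moreover have "integral T (off_P g) = integral T g"
    by (rule integral_spike[of P]) (auto simp: g_off_P negligible_finite[OF \<open>finite P\<close>])
  ultimately show "norm (integral {-\<rho>..\<rho>} g) \<le> 124 * D / \<rho>"
    by (simp add: T_def)
qed

lemma Im_inverse_of_real_plus_i: "Im (1 / (of_real x + \<i>)) = - 1 / (x\<^sup>2 + 1)"
proof -
  have "of_real x + \<i> = Complex x 1" by (simp add: complex_eq_iff)
  then show ?thesis by (simp add: Im_divide power2_eq_square)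
qed

lemma has_integral_inverse_1_plus_square:
  assumes "0 \<le> \<rho>"
  shows "((\<lambda>x. 1 / (x\<^sup>2 + 1)) has_integral 2 * arctan \<rho>) {-\<rho>..\<rho>}"
proof -
  have "((\<lambda>x. 1 / (x\<^sup>2 + 1)) has_integral arctan \<rho> - arctan (- \<rho>)) {-\<rho>..\<rho>}"
  proof (rule fundamental_theorem_of_calculus)
    fix x :: real
    have "(arctan has_real_derivative 1 / (x\<^sup>2 + 1)) (at x)"
      using DERIV_arctan[of x] by (simp add: inverse_eq_divide add.commute)
    then show "(arctan has_vector_derivative 1 / (x\<^sup>2 + 1)) (at x within {-\<rho>..\<rho>})"
      by (simp add: has_real_derivative_iff_has_vector_derivative has_vector_derivative_at_within)
  qed (use assms in simp)
  then show ?thesis by (simp add: arctan_minus)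
qed

text \<open>On the real axis \<open>- Im (sqrt_quot a r1 r2 x)\<close> is the integrand on the allowed region and
  vanishes elsewhere, while \<open>- Im (1/(x + \<i>)) = 1/(x\<^sup>2 + 1)\<close> integrates to \<open>2 arctan \<rho>\<close>.\<close>
lemma integral_allowed_region_approx:
  assumes order: "a 1 < a 2" "a 2 < a 3" "a 3 < a 4"
      "a 1 \<le> r1" "r1 \<le> r2" "r2 \<le> a 4" "r1 \<le> a 3" "a 2 \<le> r2"
    and D: "\<bar>r1\<bar> + \<bar>r2\<bar> + (\<Sum>k\<in>{1..4}. \<bar>a k\<bar>) \<le> D" "1 \<le> D" and "2 * D \<le> \<rho>"
  shows "(\<lambda>x. sqrt \<bar>rad_quot a r1 r2 x\<bar>) integrable_on allowed_region a r1 r2"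
    and "\<bar>integral (allowed_region a r1 r2) (\<lambda>x. sqrt \<bar>rad_quot a r1 r2 x\<bar>) - 2 * arctan \<rho>\<bar>
      \<le> 124 * D / \<rho>"
proof -
  define U where "U = allowed_region a r1 r2"
  define W where "W x = sqrt \<bar>rad_quot a r1 r2 x\<bar>" for x
  define g where "g x = sqrt_quot a r1 r2 (of_real x) - 1 / (of_real x + \<i>)" for x
  define T where "T = {-\<rho>..\<rho>}"
  have g: "g integrable_on T" "norm (integral T g) \<le> 124 * D / \<rho>"
    unfolding g_def T_def using integral_sqrt_quot_real_le[OF order(1-3) D \<open>2 * D \<le> \<rho>\<close>] by auto
  have "\<bar>a k\<bar> \<le> \<rho>" if "k \<in> {1..4}" for k
  proof -
    have "\<bar>a k\<bar> \<le> (\<Sum>k\<in>{1..4}. \<bar>a k\<bar>)"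
      using that by (intro member_le_sum) auto
    then show ?thesis using D \<open>2 * D \<le> \<rho>\<close> by linarith
  qed
  from this[of 1] this[of 4] have "U \<subseteq> T"
    using order by (auto simp: U_def T_def allowed_region_def)
  have "((\<lambda>x. Im (g x)) has_integral Im (integral T g)) T"
    using has_integral_linear[OF integrable_integral[OF g(1)] bounded_linear_Im] by (simp add: o_def)
  then have "((\<lambda>x. 1 / (x\<^sup>2 + 1) - Im (g x)) has_integral 2 * arctan \<rho> - Im (integral T g)) T"
    unfolding T_def using \<open>1 \<le> D\<close> \<open>2 * D \<le> \<rho>\<close>
    by (intro has_integral_diff has_integral_inverse_1_plus_square) auto
  then have "((\<lambda>x. if x \<in> U then W x else 0) has_integral 2 * arctan \<rho> - Im (integral T g)) T"
  proof (rule has_integral_spike_finite[OF finite_branch_points[of a r1 r2], rotated])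
    fix x assume "x \<in> T - branch_points a r1 r2"
    then show "(if x \<in> U then W x else 0) = 1 / (x\<^sup>2 + 1) - Im (g x)"
      using Im_sqrt_quot_of_real[OF order] by (simp add: g_def U_def W_def Im_inverse_of_real_plus_i)
  qed
  then have W: "(W has_integral 2 * arctan \<rho> - Im (integral T g)) U"
    using has_integral_restrict[OF \<open>U \<subseteq> T\<close>] by blast
  then show "(\<lambda>x. sqrt \<bar>rad_quot a r1 r2 x\<bar>) integrable_on allowed_region a r1 r2"
    unfolding U_def W_def by blast
  have "\<bar>integral U W - 2 * arctan \<rho>\<bar> = \<bar>Im (integral T g)\<bar>"
    using integral_unique[OF W] by simp
  also have "\<dots> \<le> 124 * D / \<rho>"
    using abs_Im_le_cmod g(2) by (rule order_trans)
  finally show "\<bar>integral (allowed_region a r1 r2) (\<lambda>x. sqrt \<bar>rad_quot a r1 r2 x\<bar>) - 2 * arctan \<rho>\<bar>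
      \<le> 124 * D / \<rho>"
    unfolding U_def W_def .
qed

theorem has_integral_allowed_region:
  assumes "a 1 < a 2" "a 2 < a 3" "a 3 < a 4"
    "a 1 \<le> r1" "r1 \<le> r2" "r2 \<le> a 4" "r1 \<le> a 3" "a 2 \<le> r2"
  shows "((\<lambda>x. sqrt \<bar>rad_quot a r1 r2 x\<bar>) has_integral pi) (allowed_region a r1 r2)"
proof -
  define D where "D = \<bar>r1\<bar> + \<bar>r2\<bar> + (\<Sum>k\<in>{1..4}. \<bar>a k\<bar>) + 1"
  define S where "S = integral (allowed_region a r1 r2) (\<lambda>x. sqrt \<bar>rad_quot a r1 r2 x\<bar>)"
  have D: "\<bar>r1\<bar> + \<bar>r2\<bar> + (\<Sum>k\<in>{1..4}. \<bar>a k\<bar>) \<le> D" "1 \<le> D"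
    by (auto simp: D_def intro!: sum_nonneg)
  note approx = integral_allowed_region_approx[OF assms D]
  have "((\<lambda>\<rho>. S - 2 * arctan \<rho>) \<longlongrightarrow> S - 2 * (pi / 2)) at_top"
    by (intro tendsto_intros tendsto_arctan_at_top)
  moreover have "((\<lambda>\<rho>. S - 2 * arctan \<rho>) \<longlongrightarrow> 0) at_top"
  proof (rule tendsto_0_le[where K = "124 * D"])
    show "((\<lambda>\<rho>::real. inverse \<rho>) \<longlongrightarrow> 0) at_top"
      by (rule tendsto_inverse_0_at_top[OF filterlim_ident])
    show "\<forall>\<^sub>F \<rho> in at_top. norm (S - 2 * arctan \<rho>) \<le> norm (inverse \<rho>) * (124 * D)"
      using eventually_ge_at_top[of "2 * D"]
    proof eventually_elim
      case (elim \<rho>)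
      then have "0 < \<rho>" using D by linarith
      then show ?case
        using approx(2)[OF elim] by (simp add: S_def divide_inverse mult.commute)
    qed
  qed
  ultimately have "S = pi"
    using tendsto_unique[OF trivial_limit_at_top_linorder] by fastforce
  then show ?thesis
    using approx(1)[OF order_refl] by (simp add: S_def has_integral_integrable_integral)
qed

lemma integral_allowed_region_split:
  fixes f :: "real \<Rightarrow> 'b::banach"
  assumes "a 2 < a 3" and f: "f integrable_on allowed_region a r1 r2"
  shows "f integrable_on {a 1..min r1 (a 2)}" "f integrable_on {max r1 (a 2)..min r2 (a 3)}"
      "f integrable_on {max r2 (a 3)..a 4}"
    and "integral (allowed_region a r1 r2) f = integral {a 1..min r1 (a 2)} f
      + integral {max r1 (a 2)..min r2 (a 3)} f + integral {max r2 (a 3)..a 4} f"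
proof -
  define I1 I2 I3 where "I1 = {a 1..min r1 (a 2)}" and "I2 = {max r1 (a 2)..min r2 (a 3)}"
    and "I3 = {max r2 (a 3)..a 4}"
  have "I1 \<subseteq> allowed_region a r1 r2" "I2 \<subseteq> allowed_region a r1 r2" "I3 \<subseteq> allowed_region a r1 r2"
    by (auto simp: allowed_region_def I1_def I2_def I3_def)
  then show int: "f integrable_on I1" "f integrable_on I2" "f integrable_on I3"
    unfolding I1_def I2_def I3_def by (auto intro: integrable_on_subinterval[OF f])
  have "I1 \<inter> I2 \<subseteq> {a 2}" "(I1 \<union> I2) \<inter> I3 \<subseteq> {a 3}"
    using \<open>a 2 < a 3\<close> by (auto simp: I1_def I2_def I3_def)
  then have "negligible (I1 \<inter> I2)" "negligible ((I1 \<union> I2) \<inter> I3)"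
    by (auto intro: negligible_subset[OF negligible_sing])
  then have "(f has_integral integral I1 f + integral I2 f + integral I3 f) (I1 \<union> I2 \<union> I3)"
    using int by (intro has_integral_Un integrable_integral) auto
  then show "integral (allowed_region a r1 r2) f = integral I1 f + integral I2 f + integral I3 f"
    by (simp add: allowed_region_def I1_def I2_def I3_def integral_unique)
qed

section \<open>Interlacing of roots and poles\<close>

lemma sum_pairs4:
  "(\<Sum>(i, j)\<in>pairs4. F i j) = F 1 2 + F 1 3 + F 1 4 + F 2 3 + F 2 4 + F 3 4"
proof -
  have pairs4_eq: "pairs4 = {(1,2), (1,3), (1,4), (2,3), (2,4), (3,4)}"
    unfolding pairs4_def by auto
  show ?thesis
    unfolding pairs4_eq by (simp add: add.assoc)
qed

text \<open>By Cauchy--Schwarz and the Pluecker relation, \<open>\<alpha> l34\<^sup>2 \<le> \<gamma> l13\<^sup>2 + \<beta> l14\<^sup>2\<close>, and the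
  hypothesis gives \<open>\<alpha> (l23\<^sup>2 + l24\<^sup>2) < \<gamma> l12\<^sup>2\<close>.\<close>
lemma plucker_inequality:
  fixes \<alpha> \<beta> \<gamma> l12 l13 l14 l23 l24 l34 :: real
  assumes "0 < \<alpha>" "0 < \<beta>" "\<beta> < \<gamma>"
    and plucker: "l12 * l34 = l13 * l24 - l14 * l23"
    and pos: "0 < \<beta> * \<gamma> * l12\<^sup>2 - \<alpha> * \<gamma> * l23\<^sup>2 - \<alpha> * \<beta> * l24\<^sup>2"
  shows "- (\<beta> + \<gamma>) * l12\<^sup>2 - \<gamma> * l13\<^sup>2 - \<beta> * l14\<^sup>2 + (\<alpha> - \<gamma>) * l23\<^sup>2
    + (\<alpha> - \<beta>) * l24\<^sup>2 + \<alpha> * l34\<^sup>2 < 0"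
proof -
  define X where "X = \<gamma> * l13\<^sup>2 + \<beta> * l14\<^sup>2"
  define Y where "Y = \<beta> * l24\<^sup>2 + \<gamma> * l23\<^sup>2"
  have "0 < \<gamma>" using assms by linarith
  have "0 \<le> X" "0 \<le> Y" unfolding X_def Y_def using \<open>0 < \<beta>\<close> \<open>0 < \<gamma>\<close> by simp_all
  have \<alpha>Y: "\<alpha> * Y < \<beta> * \<gamma> * l12\<^sup>2" using pos unfolding Y_def by (simp add: algebra_simps)
  have "0 < \<beta> * \<gamma> * l12\<^sup>2"
    using \<alpha>Y mult_nonneg_nonneg[of \<alpha> Y] \<open>0 < \<alpha>\<close> \<open>0 \<le> Y\<close> by linarith
  have "X * Y - (l13 * l24 - l14 * l23)\<^sup>2 * (\<beta> * \<gamma>) = (\<gamma> * l13 * l23 + \<beta> * l14 * l24)\<^sup>2"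
    unfolding X_def Y_def by (simp add: power2_eq_square algebra_simps)
  then have cs: "(l12 * l34)\<^sup>2 * (\<beta> * \<gamma>) \<le> X * Y"
    unfolding plucker by (metis diff_ge_0_iff_ge zero_le_power2)
  have "(\<beta> * \<gamma> * l12\<^sup>2) * (\<alpha> * l34\<^sup>2) = \<alpha> * ((l12 * l34)\<^sup>2 * (\<beta> * \<gamma>))"
    by (simp add: power2_eq_square algebra_simps)
  also have "\<dots> \<le> \<alpha> * (X * Y)" using cs \<open>0 < \<alpha>\<close> by simp
  also have "\<dots> = X * (\<alpha> * Y)" by simp
  also have "\<dots> \<le> X * (\<beta> * \<gamma> * l12\<^sup>2)" using \<alpha>Y \<open>0 \<le> X\<close> by (simp add: mult_left_mono)
  finally have "(\<beta> * \<gamma> * l12\<^sup>2) * (\<alpha> * l34\<^sup>2) \<le> (\<beta> * \<gamma> * l12\<^sup>2) * X"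
    by (simp add: mult.commute)
  then have l34: "\<alpha> * l34\<^sup>2 \<le> X"
    using \<open>0 < \<beta> * \<gamma> * l12\<^sup>2\<close> mult_le_cancel_left_pos by blast
  have "\<alpha> * \<beta> * l23\<^sup>2 \<le> \<alpha> * \<gamma> * l23\<^sup>2"
    using assms by (simp add: mult_right_mono)
  then have "\<beta> * (\<alpha> * (l23\<^sup>2 + l24\<^sup>2)) < \<beta> * (\<gamma> * l12\<^sup>2)"
    using \<alpha>Y unfolding Y_def by (simp add: algebra_simps)
  then have "\<alpha> * (l23\<^sup>2 + l24\<^sup>2) < \<gamma> * l12\<^sup>2"
    using \<open>0 < \<beta>\<close> by simp
  moreover have "0 < \<beta> * l12\<^sup>2" "0 \<le> \<beta> * l24\<^sup>2" "0 \<le> \<gamma> * l23\<^sup>2"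
    using \<open>0 < \<beta> * \<gamma> * l12\<^sup>2\<close> \<open>0 < \<beta>\<close> \<open>0 < \<gamma>\<close> by (auto simp: zero_less_mult_iff)
  ultimately show ?thesis
    using l34 unfolding X_def by (simp add: algebra_simps)
qed

lemma momentum_image_coordinates:
  assumes "(n1, n2) \<in> momentum_image e h"
  obtains l12 l13 l14 l23 l24 l34 :: real
  where "l12\<^sup>2 + l13\<^sup>2 + l14\<^sup>2 + l23\<^sup>2 + l24\<^sup>2 + l34\<^sup>2 = 2 * h"
    and "l12 * l34 = l13 * l24 - l14 * l23"
    and "n1 = l12\<^sup>2 * (e 3 + e 4) + l13\<^sup>2 * (e 2 + e 4) + l14\<^sup>2 * (e 2 + e 3)
      + l23\<^sup>2 * (e 1 + e 4) + l24\<^sup>2 * (e 1 + e 3) + l34\<^sup>2 * (e 1 + e 2)"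
    and "n2 = l12\<^sup>2 * (e 3 * e 4) + l13\<^sup>2 * (e 2 * e 4) + l14\<^sup>2 * (e 2 * e 3)
      + l23\<^sup>2 * (e 1 * e 4) + l24\<^sup>2 * (e 1 * e 3) + l34\<^sup>2 * (e 1 * e 2)"
proof -
  obtain L where L: "L \<in> M_h h" "n1 = eta1 e L" "n2 = eta2 e L"
    using assms unfolding momentum_image_def by auto
  show ?thesis
  proof
    show "(L 1 2)\<^sup>2 + (L 1 3)\<^sup>2 + (L 1 4)\<^sup>2 + (L 2 3)\<^sup>2 + (L 2 4)\<^sup>2 + (L 3 4)\<^sup>2 = 2 * h"
      using L(1) unfolding M_h_def sum_pairs4 by simp
    show "L 1 2 * L 3 4 = L 1 3 * L 2 4 - L 1 4 * L 2 3"
      using L(1) unfolding M_h_def by simp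
    show "n1 = (L 1 2)\<^sup>2 * (e 3 + e 4) + (L 1 3)\<^sup>2 * (e 2 + e 4) + (L 1 4)\<^sup>2 * (e 2 + e 3)
      + (L 2 3)\<^sup>2 * (e 1 + e 4) + (L 2 4)\<^sup>2 * (e 1 + e 3) + (L 3 4)\<^sup>2 * (e 1 + e 2)"
      using L(2) unfolding eta1_def sum_pairs4 atLeastAtMost_1_4 by (simp add: insert_Diff_if)
    show "n2 = (L 1 2)\<^sup>2 * (e 3 * e 4) + (L 1 3)\<^sup>2 * (e 2 * e 4) + (L 1 4)\<^sup>2 * (e 2 * e 3)
      + (L 2 3)\<^sup>2 * (e 1 * e 4) + (L 2 4)\<^sup>2 * (e 1 * e 3) + (L 3 4)\<^sup>2 * (e 1 * e 2)"
      using L(3) unfolding eta2_def sum_pairs4 atLeastAtMost_1_4 by (simp add: insert_Diff_if)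
  qed
qed

lemma momentum_image_interlacing:
  assumes "e 1 < e 2" "e 2 < e 3" "e 3 < e 4" "0 < h"
    and "(n1, n2) \<in> momentum_image e h"
    and R: "\<forall>z. polyR h n1 n2 z = 2 * h * (z - r1) * (z - r2)"
    and "r1 \<le> r2"
  shows "r1 \<le> e 3" "e 2 \<le> r2"
proof -
  obtain l12 l13 l14 l23 l24 l34 where sum_sq: "l12\<^sup>2 + l13\<^sup>2 + l14\<^sup>2 + l23\<^sup>2 + l24\<^sup>2 + l34\<^sup>2 = 2 * h"
    and plucker: "l12 * l34 = l13 * l24 - l14 * l23"
    and n1: "n1 = l12\<^sup>2 * (e 3 + e 4) + l13\<^sup>2 * (e 2 + e 4) + l14\<^sup>2 * (e 2 + e 3)
      + l23\<^sup>2 * (e 1 + e 4) + l24\<^sup>2 * (e 1 + e 3) + l34\<^sup>2 * (e 1 + e 2)"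
    and n2: "n2 = l12\<^sup>2 * (e 3 * e 4) + l13\<^sup>2 * (e 2 * e 4) + l14\<^sup>2 * (e 2 * e 3)
      + l23\<^sup>2 * (e 1 * e 4) + l24\<^sup>2 * (e 1 * e 3) + l34\<^sup>2 * (e 1 * e 2)"
    using momentum_image_coordinates[OF assms(5)] by blast
  have R_z: "2 * h * z\<^sup>2 - n1 * z + n2 = 2 * h * (z - r1) * (z - r2)" for z
    using R unfolding polyR_def by simp
  then have n1_r: "n1 = 2 * h * (r1 + r2)"
    using R_z[of 0] R_z[of 1] by (simp add: algebra_simps)
  have h_eq: "h = (l12\<^sup>2 + l13\<^sup>2 + l14\<^sup>2 + l23\<^sup>2 + l24\<^sup>2 + l34\<^sup>2) / 2"
    using sum_sq by simp
  have R_e2: "2 * h * (e 2 - r1) * (e 2 - r2) = (e 3 - e 2) * (e 4 - e 2) * l12\<^sup>2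
      - (e 2 - e 1) * (e 4 - e 2) * l23\<^sup>2 - (e 2 - e 1) * (e 3 - e 2) * l24\<^sup>2"
    unfolding R_z[symmetric] by (simp add: n1 n2 algebra_simps power2_eq_square field_simps h_eq)
  have dR_e2: "2 * h * (2 * e 2 - r1 - r2) = - ((e 3 - e 2) + (e 4 - e 2)) * l12\<^sup>2
      - (e 4 - e 2) * l13\<^sup>2 - (e 3 - e 2) * l14\<^sup>2 + ((e 2 - e 1) - (e 4 - e 2)) * l23\<^sup>2
      + ((e 2 - e 1) - (e 3 - e 2)) * l24\<^sup>2 + (e 2 - e 1) * l34\<^sup>2"
    using n1_r by (simp add: n1 algebra_simps power2_eq_square field_simps h_eq)
  have R_e3: "2 * h * (e 3 - r1) * (e 3 - r2) = (e 3 - e 2) * (e 3 - e 1) * l34\<^sup>2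
      - (e 4 - e 3) * (e 3 - e 1) * l23\<^sup>2 - (e 4 - e 3) * (e 3 - e 2) * l13\<^sup>2"
    unfolding R_z[symmetric] by (simp add: n1 n2 algebra_simps power2_eq_square field_simps h_eq)
  have dR_e3: "2 * h * (r1 + r2 - 2 * e 3) = - ((e 3 - e 2) + (e 3 - e 1)) * l34\<^sup>2
      - (e 3 - e 1) * l24\<^sup>2 - (e 3 - e 2) * l14\<^sup>2 + ((e 4 - e 3) - (e 3 - e 1)) * l23\<^sup>2
      + ((e 4 - e 3) - (e 3 - e 2)) * l13\<^sup>2 + (e 4 - e 3) * l12\<^sup>2"
    using n1_r by (simp add: n1 algebra_simps power2_eq_square field_simps h_eq)
  show "e 2 \<le> r2"
  proof (rule ccontr)
    assume "\<not> e 2 \<le> r2"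
    then have "0 < 2 * h * (e 2 - r1) * (e 2 - r2)" "0 < 2 * h * (2 * e 2 - r1 - r2)"
      using \<open>0 < h\<close> \<open>r1 \<le> r2\<close> by auto
    then show False
      using plucker_inequality[of "e 2 - e 1" "e 3 - e 2" "e 4 - e 2" l12 l34 l13 l24 l14 l23]
        plucker assms(1-3) R_e2 dR_e2 by linarith
  qed
  show "r1 \<le> e 3"
  proof (rule ccontr)
    assume "\<not> r1 \<le> e 3"
    then have "0 < (e 3 - r1) * (e 3 - r2)"
      using \<open>r1 \<le> r2\<close> by (intro mult_neg_neg) auto
    then have "0 < 2 * h * (e 3 - r1) * (e 3 - r2)" "0 < 2 * h * (r1 + r2 - 2 * e 3)"
      using \<open>0 < h\<close> \<open>\<not> r1 \<le> e 3\<close> \<open>r1 \<le> r2\<close> by (simp_all add: mult.assoc)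
    moreover have "l34 * l12 = l24 * l13 - l14 * l23"
      using plucker by (simp add: algebra_simps)
    ultimately show False
      using plucker_inequality[of "e 4 - e 3" "e 3 - e 2" "e 3 - e 1" l34 l12 l24 l13 l14 l23]
        assms(1-3) R_e3 dR_e3 by linarith
  qed
qed

lemma mom_p_eq_sqrt_rad_quot:
  assumes "\<forall>z. polyR h n1 n2 z = 2 * h * (z - r1) * (z - r2)"
  shows "mom_p e h n1 n2 x = sqrt (h / 2 * - rad_quot e r1 r2 x)"
proof -
  have "polyR h n1 n2 x = 2 * h * ((x - r1) * (x - r2))"
    using assms by (simp add: mult.assoc)
  then have "- polyR h n1 n2 x / (4 * polyA e x) = h / 2 * - rad_quot e r1 r2 x"
    unfolding rad_quot_def by (cases "polyA e x = 0") (simp_all add: field_simps)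
  then show ?thesis by (simp add: mom_p_def)
qed

lemma has_integral_mom_p:
  assumes "e 1 < e 2" "e 2 < e 3" "e 3 < e 4" "e 1 \<le> r1" "r1 \<le> r2" "r2 \<le> e 4" "r1 \<le> e 3" "e 2 \<le> r2"
    and "\<forall>z. polyR h n1 n2 z = 2 * h * (z - r1) * (z - r2)"
  shows "(mom_p e h n1 n2 has_integral sqrt (h / 2) * pi) (allowed_region e r1 r2)"
proof (rule has_integral_spike_finite[OF finite_branch_points])
  show "((\<lambda>x. sqrt (h / 2) * sqrt \<bar>rad_quot e r1 r2 x\<bar>) has_integral sqrt (h / 2) * pi)
      (allowed_region e r1 r2)"
    by (intro has_integral_mult_right has_integral_allowed_region assms(1-8))
  show "mom_p e h n1 n2 x = sqrt (h / 2) * sqrt \<bar>rad_quot e r1 r2 x\<bar>"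
    if "x \<in> allowed_region e r1 r2 - branch_points e r1 r2" for x
  proof -
    have "\<bar>rad_quot e r1 r2 x\<bar> = - rad_quot e r1 r2 x"
      using rad_quot_nonpos_on_allowed_region[OF assms(1-8), of x] that by simp
    then show ?thesis
      unfolding mom_p_eq_sqrt_rad_quot[OF assms(9)] real_sqrt_mult[symmetric] by simp
  qed
qed

theorem lemma5:
  fixes e :: "nat \<Rightarrow> real" and h n1 n2 r1 r2 :: real
  assumes "e 1 < e 2" "e 2 < e 3" "e 3 < e 4"
    and "h > 0"
    and "(n1, n2) \<in> momentum_image e h"
    and "\<forall>z. polyR h n1 n2 z = 2 * h * (z - r1) * (z - r2)"
    and "r1 \<le> r2" "e 1 \<le> r1" "r2 \<le> e 4"
  shows "2 / pi * integral {e 1 .. min r1 (e 2)} (mom_p e h n1 n2)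
       + 2 / pi * integral {max r1 (e 2) .. min r2 (e 3)} (mom_p e h n1 n2)
       + 2 / pi * integral {max r2 (e 3) .. e 4} (mom_p e h n1 n2) = sqrt (2 * h)"
proof -
  note interlaced = assms(1-3,8,7,9) momentum_image_interlacing[OF assms(1-7)]
  have "(mom_p e h n1 n2 has_integral sqrt (h / 2) * pi) (allowed_region e r1 r2)"
    by (rule has_integral_mom_p[OF interlaced assms(6)])
  then have "integral {e 1 .. min r1 (e 2)} (mom_p e h n1 n2)
      + integral {max r1 (e 2) .. min r2 (e 3)} (mom_p e h n1 n2)
      + integral {max r2 (e 3) .. e 4} (mom_p e h n1 n2) = sqrt (h / 2) * pi"
    using integral_allowed_region_split(4)[OF \<open>e 2 < e 3\<close> has_integral_integrable]
      integral_unique by metis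
  then have "2 / pi * integral {e 1 .. min r1 (e 2)} (mom_p e h n1 n2)
       + 2 / pi * integral {max r1 (e 2) .. min r2 (e 3)} (mom_p e h n1 n2)
       + 2 / pi * integral {max r2 (e 3) .. e 4} (mom_p e h n1 n2) = 2 * sqrt (h / 2)"
    by (simp add: field_simps)
  also have "2 * sqrt (h / 2) = sqrt (4 * (h / 2))"
    by (simp only: real_sqrt_mult real_sqrt_four)
  finally show ?thesis
    by simp
qed

end
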